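(* Let $K_1,K_2>0$. For $0<x\le K_1$, $v>0$ and $x^2v\ge K_2$, \[ \varepsilon_1(x,v)-x\,\overline{\varepsilon_1(1/x,x^2v)}\ll(x^2v)^{-1/2}, \] where the implied constant depends only on $K_1$ and $K_2$, and \[ \varepsilon_1(x,v)=-\int_v^\infty\frac{e^{2\pi itx}}{\pi t}(\log t+2\gamma)\,dt+\frac{e^{2\pi ivx}}{v}\Delta(v)-\int_v^\infty\Delta(t)\frac{e^{2\pi itx}}{t^2}\,dt. \]
   Context: $\tau(n)$ is the number of divisors of $n$, $\gamma$ is Euler's constant, and for $t>0$, $\Delta(t)=\sum_{n\le t}\tau(n)-t(\log t+2\gamma-1)$. The first integral in $\varepsilon_1$ is an improper integral. *)

theory Defs
  imports "HOL-Analysis.Analysis"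
begin

definition tau :: "nat \<Rightarrow> nat" where
  "tau n = card {d. d dvd n}"

text \<open>Error term in the Dirichlet divisor problem, for t > 0.\<close>
definition Delta :: "real \<Rightarrow> real" where
  "Delta t = (\<Sum>n\<in>{1..nat \<lfloor>t\<rfloor>}. real (tau n)) - t * (ln t + 2 * euler_mascheroni - 1)"

definition improper_integral_from :: "real \<Rightarrow> (real \<Rightarrow> complex) \<Rightarrow> complex" where
  "improper_integral_from v f = Lim at_top (\<lambda>T. integral {v..T} f)"

definition eps1 :: "real \<Rightarrow> real \<Rightarrow> complex" where
  "eps1 x v =
     - improper_integral_from v
         (\<lambda>t. exp (2 * pi * \<i> * t * x) / (pi * t) * (ln t + 2 * euler_mascheroni))
     + exp (2 * pi * \<i> * v * x) / v * Delta v
     - integral {v..} (\<lambda>t. Delta t * exp (2 * pi * \<i> * t * x) / t\<^sup>2)"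

end

theory Submission
  imports Defs
begin

text \<open>
  The two sides need not cancel: each is separately \<open>O((x^2 v)^(-1/2))\<close>.
  Dirichlet's hyperbola method gives \<open>|\<Delta>(t)| \<le> 10 \<surd>t\<close>, so the boundary term
  \<open>e(vx) \<Delta>(v) / v\<close> and the integral of \<open>\<Delta>(t) e(tx) / t^2\<close> over \<open>[v, \<infinity>)\<close> are \<open>O(1 / \<surd>v)\<close>.
  One integration by parts in the first integral of \<open>\<epsilon>\<^sub>1\<close>, against the antiderivative
  \<open>e(tx) / (2\<pi>ix)\<close> of the oscillating factor, bounds it by \<open>O(1 / (x \<surd>v))\<close>.  Hence
  \<open>\<epsilon>\<^sub>1(y, w) = O(1 / (y \<surd>w) + 1 / \<surd>w)\<close> for \<open>w\<close> bounded below, and for \<open>x \<le> K\<^sub>1\<close> both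
  \<open>\<epsilon>\<^sub>1(x, v)\<close> and \<open>x \<epsilon>\<^sub>1(1/x, x^2 v)\<close> are \<open>O(1 / (x \<surd>v)) = O((x^2 v)^(-1/2))\<close>.
\<close>

section \<open>Dirichlet's divisor problem\<close>

lemma sum_tau_eq_card_lattice_points:
  "(\<Sum>n\<in>{1..M}. tau n) = card {(d, m). 1 \<le> d \<and> 1 \<le> m \<and> d * m \<le> M}"
proof -
  let ?S = "{(d, m). 1 \<le> d \<and> 1 \<le> m \<and> d * m \<le> M}"
  have "bij_betw (\<lambda>(d, m). (d * m, d)) ?S (SIGMA n:{1..M}. {d. d dvd n})"
    by (rule bij_betw_byWitness[where f' = "\<lambda>(n, d). (d, n div d)"])
      (auto simp: dvd_def Suc_le_eq)
  then have "card ?S = card (SIGMA n:{1..M}. {d. d dvd n})"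
    by (rule bij_betw_same_card)
  then show ?thesis
    by (simp add: tau_def)
qed

lemma multiples_le_eq: "0 < d \<Longrightarrow> {m. 1 \<le> m \<and> d * m \<le> M} = {1..M div d :: nat}"
  by (auto simp: less_eq_div_iff_mult_less_eq mult.commute)

lemma card_lattice_points_hyperbola:
  fixes M N :: nat
  assumes lower: "N * N \<le> M" and upper: "M < Suc N * Suc N"
  shows "card {(d, m). 1 \<le> d \<and> 1 \<le> m \<and> d * m \<le> M} + N * N = 2 * (\<Sum>d\<in>{1..N}. M div d)"
proof -
  let ?S = "{(d, m). 1 \<le> d \<and> 1 \<le> m \<and> d * m \<le> M}"
  define A where "A = (SIGMA d:{1..N}. {m. 1 \<le> m \<and> d * m \<le> M})"
  have A_eq: "A = (SIGMA d:{1..N}. {1..M div d})"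
    unfolding A_def by (intro Sigma_cong refl multiples_le_eq) auto
  have card_A: "card A = (\<Sum>d\<in>{1..N}. M div d)"
    by (simp add: A_eq)
  have card_swap: "card (prod.swap ` A) = card A"
    by (rule card_image[OF inj_swap])
  have "A \<union> prod.swap ` A = ?S"
  proof
    show "A \<union> prod.swap ` A \<subseteq> ?S" by (auto simp: A_def mult.commute)
    show "?S \<subseteq> A \<union> prod.swap ` A"
    proof
      fix p assume "p \<in> ?S"
      then obtain d m where dm: "p = (d, m)" "1 \<le> d" "1 \<le> m" "d * m \<le> M" by auto
      have "d \<le> N \<or> m \<le> N"
        using mult_le_mono[of "Suc N" d "Suc N" m] dm upper by linarith
      then show "p \<in> A \<union> prod.swap ` A"
        using dm by (auto simp: A_def image_iff mult.commute)
    qed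
  qed
  moreover have "A \<inter> prod.swap ` A = {1..N} \<times> {1..N}"
  proof
    show "A \<inter> prod.swap ` A \<subseteq> {1..N} \<times> {1..N}" by (auto simp: A_def)
    show "{1..N} \<times> {1..N} \<subseteq> A \<inter> prod.swap ` A"
    proof
      fix p assume "p \<in> {1..N} \<times> {1..N}"
      then obtain d m where "p = (d, m)" "d \<in> {1..N}" "m \<in> {1..N}" by auto
      moreover from this have "d * m \<le> M"
        using mult_le_mono[of d N m N] lower by auto
      ultimately show "p \<in> A \<inter> prod.swap ` A"
        by (auto simp: A_def image_iff mult.commute)
    qed
  qed
  moreover have "card (A \<union> prod.swap ` A) + card (A \<inter> prod.swap ` A) = card A + card (prod.swap ` A)"
    using card_Un_Int[of A "prod.swap ` A"] by (simp add: A_eq)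
  ultimately show ?thesis
    using card_A card_swap by simp
qed

lemma ln_diff_le_divide:
  fixes a b :: real
  assumes "0 < a" "a \<le> b" shows "ln b - ln a \<le> (b - a) / a"
proof -
  have "ln b - ln a = ln (b / a)" using assms by (simp add: ln_divide_pos[of b a])
  also have "\<dots> \<le> b / a - 1" using assms by (intro ln_le_minus_one) auto
  finally show ?thesis using assms by (simp add: diff_divide_distrib)
qed

lemma harm_minus_ln_bounds:
  assumes "1 \<le> n"
  shows "0 \<le> harm n - ln (real n) - euler_mascheroni"
    and "harm n - ln (real n) - euler_mascheroni \<le> 1 / real n"
proof -
  have "euler_mascheroni \<le> harm n - ln (real n)"
    using euler_mascheroni_sequence_decreasing[of n] assms
    by (intro LIMSEQ_le_const2[OF euler_mascheroni_LIMSEQ]) auto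
  then show "0 \<le> harm n - ln (real n) - euler_mascheroni" by simp
  have "harm n - ln (real (Suc n)) + inverse (real (2 * (n + 1))) \<le> euler_mascheroni"
    using euler_mascheroni_bounds[OF assms] by simp
  moreover have "0 \<le> inverse (real (2 * (n + 1)))" by simp
  moreover have "ln (real (Suc n)) - ln (real n) \<le> 1 / real n"
    using ln_diff_le_divide[of "real n" "real (Suc n)"] assms by simp
  ultimately show "harm n - ln (real n) - euler_mascheroni \<le> 1 / real n" by linarith
qed

lemma sum_div_harm_bounds:
  fixes M N :: nat
  shows "real M * harm N - real N \<le> (\<Sum>d\<in>{1..N}. real (M div d))"
    and "(\<Sum>d\<in>{1..N}. real (M div d)) \<le> real M * harm N"
proof -
  have harm: "real M * harm N = (\<Sum>d\<in>{1..N}. real M / real d)"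
    by (simp add: harm_def sum_distrib_left divide_inverse)
  have "real M / real d - 1 \<le> real (M div d) \<and> real (M div d) \<le> real M / real d" for d
    using floor_divide_of_nat_eq[of M d, where 'a = real] by linarith
  then show "real M * harm N - real N \<le> (\<Sum>d\<in>{1..N}. real (M div d))"
    and "(\<Sum>d\<in>{1..N}. real (M div d)) \<le> real M * harm N"
    unfolding harm using sum_mono[of "{1..N}" "\<lambda>d. real M / real d - 1" "\<lambda>d. real (M div d)"]
      sum_mono[of "{1..N}" "\<lambda>d. real (M div d)" "\<lambda>d. real M / real d"]
    by (auto simp: sum_subtractf)
qed

lemma divisor_summatory_error_le:
  fixes M :: nat
  assumes "1 \<le> M"
  shows "\<bar>real (\<Sum>n\<in>{1..M}. tau n) - real M * (ln (real M) + 2 * euler_mascheroni - 1)\<bar>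
           \<le> 6 * sqrt (real M)"
proof -
  define r where "r = sqrt (real M)"
  define N where "N = nat \<lfloor>r\<rfloor>"
  have r: "1 \<le> r" "r * r = real M" using assms by (simp_all add: r_def)
  have N: "real N \<le> r" "r < real N + 1" "1 \<le> N" using r by (simp_all add: N_def le_nat_iff)
  have square_le: "real (N * N) \<le> real M" using N r mult_mono[of "real N" r "real N" r] by simp
  moreover have "real M < real (Suc N * Suc N)"
    using N r mult_strict_mono[of r "real N + 1" r "real N + 1"] by (simp add: algebra_simps)
  ultimately have "(\<Sum>n\<in>{1..M}. tau n) + N * N = 2 * (\<Sum>d\<in>{1..N}. M div d)"
    using card_lattice_points_hyperbola[of N M] sum_tau_eq_card_lattice_points[of M]
    by (simp only: of_nat_le_iff of_nat_less_iff)
  then have "real (\<Sum>n\<in>{1..M}. tau n) + real N * real N = 2 * (\<Sum>d\<in>{1..N}. real (M div d))"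
    by (metis of_nat_add of_nat_mult of_nat_numeral of_nat_sum)
  then have hyperbola:
    "real (\<Sum>n\<in>{1..M}. tau n) = 2 * (\<Sum>d\<in>{1..N}. real (M div d)) - real N * real N"
    by linarith
  define \<theta> where "\<theta> = harm N - ln (real N) - euler_mascheroni"
  have \<theta>: "0 \<le> \<theta>" "\<theta> \<le> 1 / real N"
    using harm_minus_ln_bounds[OF N(3)] by (simp_all add: \<theta>_def)
  have ln_r: "0 \<le> ln r - ln (real N)" "ln r - ln (real N) \<le> 1 / real N"
    using N ln_diff_le_divide[of "real N" r] divide_right_mono[of "r - real N" 1 "real N"] by auto
  have "real M \<le> 2 * real N * r" using N r mult_right_mono[of r "2 * real N" r] by linarith
  then have M_div_N: "real M * (1 / real N) \<le> 2 * r" using N by (simp add: field_simps)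
  have "real M - real N * real N = (r - real N) * (r + real N)" using r by (simp add: algebra_simps)
  also have "\<dots> \<le> 1 * (r + real N)" using N by (intro mult_right_mono) auto
  also have "\<dots> \<le> 2 * r" using N by simp
  finally have square: "real M - real N * real N \<le> 2 * r" .
  \<comment> \<open>Besides the fractional parts of \<open>M / d\<close>, the error consists of
    \<open>harm N - ln N - \<gamma>\<close> and \<open>ln \<surd>M - ln N\<close>, each \<open>O(1/N)\<close> and multiplied by \<open>M\<close>.\<close>
  have "ln (real M) = 2 * ln r" using r by (metis ln_mult_pos mult_2 zero_less_one less_le_trans)
  then have "real (\<Sum>n\<in>{1..M}. tau n) - real M * (ln (real M) + 2 * euler_mascheroni - 1)
      = 2 * (\<Sum>d\<in>{1..N}. real (M div d)) - 2 * (real M * harm N) + 2 * (real M * \<theta>)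
        - 2 * (real M * (ln r - ln (real N))) + (real M - real N * real N)"
    unfolding hyperbola \<theta>_def by (simp add: algebra_simps)
  moreover have "real M * \<theta> \<le> 2 * r" "real M * (ln r - ln (real N)) \<le> 2 * r"
    using M_div_N mult_left_mono[OF \<theta>(2), of "real M"] mult_left_mono[OF ln_r(2), of "real M"] by auto
  moreover have "0 \<le> real M - real N * real N" using square_le by simp
  moreover have "0 \<le> real M * \<theta>" "0 \<le> real M * (ln r - ln (real N))" using \<theta>(1) ln_r(1) by simp_all
  ultimately show ?thesis
    using sum_div_harm_bounds[of M N] N(1) square unfolding r_def[symmetric]
    by - (rule abs_leI; linarith)
qed

lemma ln_le_two_sqrt: "0 < t \<Longrightarrow> ln t \<le> 2 * sqrt t"
proof -
  assume t: "0 < t"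
  have "ln t = 2 * ln (sqrt t)" using t by (simp add: ln_sqrt)
  also have "\<dots> \<le> 2 * (sqrt t - 1)" using t by (intro mult_left_mono ln_le_minus_one) auto
  finally show ?thesis by simp
qed

lemma minus_ln_le_two_div_sqrt: "0 < t \<Longrightarrow> - ln t \<le> 2 / sqrt t"
  using ln_le_two_sqrt[of "1 / t"] by (simp add: ln_div real_sqrt_divide)

lemma abs_ln_le_two_sqrt:
  assumes "0 < t" shows "\<bar>ln t\<bar> \<le> 2 * sqrt t + 2 / sqrt t"
proof -
  have "0 \<le> 2 / sqrt t" "0 \<le> 2 * sqrt t" using assms by simp_all
  then show ?thesis using ln_le_two_sqrt[OF assms] minus_ln_le_two_div_sqrt[OF assms] by linarith
qed

lemma abs_Delta_le:
  assumes t: "0 < t"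
  shows "\<bar>Delta t\<bar> \<le> 10 * sqrt t"
proof (cases "1 \<le> t")
  case True
  define M where "M = nat \<lfloor>t\<rfloor>"
  have M: "real M \<le> t" "t < real M + 1" "1 \<le> M" using True by (simp_all add: M_def le_nat_iff)
  have main: "\<bar>real (\<Sum>n\<in>{1..M}. tau n) - real M * (ln (real M) + 2 * euler_mascheroni - 1)\<bar>
      \<le> 6 * sqrt t"
    using divisor_summatory_error_le[OF M(3)] real_sqrt_le_mono[OF M(1)] by linarith
  have "Delta t = (real (\<Sum>n\<in>{1..M}. tau n) - real M * (ln (real M) + 2 * euler_mascheroni - 1))
      - ((t - real M) * ln t + real M * (ln t - ln (real M))) - (2 * euler_mascheroni - 1) * (t - real M)"
    unfolding Delta_def M_def by (simp add: algebra_simps)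
  moreover have "0 \<le> (t - real M) * ln t" "(t - real M) * ln t \<le> ln t"
    using M True mult_right_mono[of "t - real M" 1 "ln t"] by auto
  moreover have "0 \<le> real M * (ln t - ln (real M))" "real M * (ln t - ln (real M)) \<le> t - real M"
    using M ln_diff_le_divide[of "real M" t] mult_left_mono[of _ _ "real M"] by (auto simp: field_simps)
  moreover have "\<bar>(2 * euler_mascheroni - 1) * (t - real M)\<bar> \<le> 1"
    using M euler_mascheroni_pos euler_mascheroni_less_13_over_22
    by (auto simp: abs_mult intro!: mult_le_one)
  moreover have "1 \<le> sqrt t" using True by simp
  ultimately show ?thesis
    using main ln_le_two_sqrt[OF t] M by - (rule abs_leI; linarith)
next
  case False
  have "t * (2 / sqrt t) = 2 * sqrt t"
    using t by (simp add: field_simps)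
  then have "t * - ln t \<le> 2 * sqrt t"
    using t mult_left_mono[OF minus_ln_le_two_div_sqrt[OF t], of t] by simp
  moreover have "0 \<le> t * - ln t" using t False by (intro mult_nonneg_nonneg) auto
  moreover have "t \<le> sqrt t"
    using t False mult_left_mono[of t 1 t] by (simp add: real_le_rsqrt power2_eq_square)
  moreover have "Delta t = t * - ln t - t * (2 * euler_mascheroni - 1)"
    using False t by (simp add: Delta_def algebra_simps)
  moreover have "\<bar>t * (2 * euler_mascheroni - 1)\<bar> \<le> t"
    using t euler_mascheroni_pos euler_mascheroni_less_13_over_22 by (simp add: abs_mult)
  ultimately show ?thesis
    by - (rule abs_leI; linarith)
qed

section \<open>Integrals over half-lines\<close>

lemma sqrt_divide_square_eq_powr:
  fixes t :: real
  assumes "0 < t"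
  shows "sqrt t / t\<^sup>2 = t powr (-3/2)"
proof -
  have "t powr (-3/2) = t powr (1/2) / t powr 2"
    using powr_diff[of t "1/2" 2] by simp
  then show ?thesis using assms by (simp add: powr_half_sqrt)
qed

lemma has_integral_powr_minus_three_halves:
  assumes "0 < v"
  shows "((\<lambda>t. t powr (-3/2)) has_integral 2 / sqrt v) {v..}"
  using has_integral_powr_to_inf[of "-3/2" v] assms
  by (simp add: powr_minus powr_half_sqrt[symmetric] field_simps)

lemma norm_integral_atLeast_le:
  fixes f :: "real \<Rightarrow> 'a::banach"
  assumes v: "0 < v" and bound: "\<And>t. v \<le> t \<Longrightarrow> norm (f t) \<le> B * t powr (-3/2)"
  shows "norm (integral {v..} f) \<le> 2 * B / sqrt v"
proof -
  have "0 \<le> B * v powr (-3/2)" using bound[of v] norm_ge_zero[of "f v"] by linarith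
  then have B: "0 \<le> B" using v by (simp add: zero_le_mult_iff)
  have majorant: "((\<lambda>t. B * t powr (-3/2)) has_integral 2 * B / sqrt v) {v..}"
    using has_integral_mult_right[OF has_integral_powr_minus_three_halves[OF v], of B]
    by (simp add: mult.commute)
  show ?thesis
  proof (cases "f integrable_on {v..}")
    case True
    then have "norm (integral {v..} f) \<le> integral {v..} (\<lambda>t. B * t powr (-3/2))"
      using majorant bound by (intro integral_norm_bound_integral) auto
    also have "\<dots> = 2 * B / sqrt v"
      by (rule integral_unique[OF majorant])
    finally show ?thesis .
  next
    case False
    then have "integral {v..} f = 0" by (rule not_integrable_integral)
    then show ?thesis using B v by simp
  qed
qed

lemma integrable_on_atLeast_powr_bound:
  fixes f :: "real \<Rightarrow> 'a::euclidean_space"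
  assumes v: "0 < v" and cont: "continuous_on {v..} f"
    and bound: "\<And>t. v \<le> t \<Longrightarrow> norm (f t) \<le> B * t powr (-3/2)"
  shows "f integrable_on {v..}"
proof (rule measurable_bounded_by_integrable_imp_integrable)
  show "f \<in> borel_measurable (lebesgue_on {v..})"
    using cont by (intro continuous_imp_measurable_on_sets_lebesgue) auto
  show "(\<lambda>t. B * t powr (-3/2)) integrable_on {v..}"
    using has_integral_mult_right[OF has_integral_powr_minus_three_halves[OF v]] by blast
qed (use bound in auto)

lemma tendsto_integral_atLeastAtMost:
  fixes f :: "real \<Rightarrow> 'a::euclidean_space"
  assumes v: "0 < v" and cont: "continuous_on {v..} f"
    and bound: "\<And>t. v \<le> t \<Longrightarrow> norm (f t) \<le> B * t powr (-3/2)"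
  shows "((\<lambda>T. integral {v..T} f) \<longlongrightarrow> integral {v..} f) at_top"
proof -
  have integrable: "f integrable_on {T..}" if "v \<le> T" for T
    using that v bound
    by (intro integrable_on_atLeast_powr_bound[where B = B] continuous_on_subset[OF cont]) auto
  have "norm (integral {v..T} f - integral {v..} f) \<le> 2 * B / sqrt T" if T: "v \<le> T" for T
  proof -
    have "(f has_integral integral {v..T} f + integral {T..} f) ({v..T} \<union> {T..})"
      using T integrable[OF order_refl] integrable[OF T]
      by (intro has_integral_Un integrable_integral integrable_on_subinterval[of f "{v..}"])
        (auto simp: Int_absorb1)
    moreover have "{v..T} \<union> {T..} = {v..}" using T by auto
    ultimately have "integral {v..} f = integral {v..T} f + integral {T..} f"
      by (simp add: integral_unique)
    then have "integral {v..T} f - integral {v..} f = - integral {T..} f"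
      by simp
    then show ?thesis
      using norm_integral_atLeast_le[of T f B] T v bound by simp
  qed
  then have "\<forall>\<^sub>F T in at_top. norm (integral {v..T} f - integral {v..} f) \<le> 2 * B / sqrt T"
    by (rule eventually_at_top_linorderI)
  moreover have "((\<lambda>T. 2 * B / sqrt T) \<longlongrightarrow> 0) at_top"
    by (intro tendsto_divide_0[OF tendsto_const] filterlim_at_top_imp_at_infinity sqrt_at_top)
  ultimately have "((\<lambda>T. integral {v..T} f - integral {v..} f) \<longlongrightarrow> 0) at_top"
    by (rule Lim_null_comparison)
  then show ?thesis by (rule LIM_zero_cancel)
qed

lemma improper_integral_from_oscillatory_le:
  fixes g g' :: "real \<Rightarrow> real" and x v L :: real
  assumes x: "0 < x" and v: "0 < v"
    and g_deriv: "\<And>t. v \<le> t \<Longrightarrow> (g has_real_derivative g' t) (at t)"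
    and g'_cont: "continuous_on {v..} g'"
    and g_le: "\<And>t. v \<le> t \<Longrightarrow> \<bar>g t\<bar> \<le> L / sqrt t"
    and g'_le: "\<And>t. v \<le> t \<Longrightarrow> \<bar>g' t\<bar> \<le> L * t powr (-3/2)"
  shows "norm (improper_integral_from v (\<lambda>t. exp (2 * pi * \<i> * t * x) * g t))
           \<le> 3 * L / (2 * pi * x * sqrt v)"
proof -
  define \<alpha> where "\<alpha> = complex_of_real (2 * pi * x) * \<i>"
  define f where "f = (\<lambda>t. exp (2 * pi * \<i> * t * x) * complex_of_real (g t))"
  define G where "G = (\<lambda>t. exp (\<alpha> * t) / \<alpha> * complex_of_real (g t))"
  define h where "h = (\<lambda>t. exp (\<alpha> * t) / \<alpha> * complex_of_real (g' t))"
  have f_eq: "f t = exp (\<alpha> * t) * g t" for t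
    by (simp add: f_def \<alpha>_def mult_ac)
  have Re_\<alpha>: "Re \<alpha> = 0"
    by (simp add: \<alpha>_def)
  have norm_\<alpha>: "norm \<alpha> = 2 * pi * x"
    using x by (simp add: \<alpha>_def norm_mult)
  have G_deriv: "(G has_vector_derivative f t + h t) (at t)" if "v \<le> t" for t
  proof -
    have "((\<lambda>z. exp (\<alpha> * z) / \<alpha>) has_field_derivative exp (\<alpha> * t)) (at (complex_of_real t))"
      using x by (auto intro!: derivative_eq_intros simp: \<alpha>_def)
    then have "((\<lambda>t. exp (\<alpha> * t) / \<alpha>) has_vector_derivative exp (\<alpha> * t)) (at t)"
      by (rule has_vector_derivative_real_field)
    from has_vector_derivative_mult[OF this has_vector_derivative_of_real[OF g_deriv[OF that]]]
    show ?thesis by (simp add: G_def h_def f_eq add.commute)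
  qed
  have h_le: "norm (h t) \<le> L / (2 * pi * x) * t powr (-3/2)" if "v \<le> t" for t
    using divide_right_mono[OF g'_le[OF that], of "2 * pi * x"] x
    by (simp add: h_def norm_mult norm_divide Re_\<alpha> norm_\<alpha>)
  have h_cont: "continuous_on {v..} h"
    unfolding h_def using x by (intro continuous_intros g'_cont) (auto simp: \<alpha>_def)
  have by_parts: "integral {v..T} f = G T - G v - integral {v..T} h" if "v \<le> T" for T
  proof -
    have "((\<lambda>t. f t + h t) has_integral G T - G v) {v..T}"
      using that G_deriv
      by (intro fundamental_theorem_of_calculus) (auto intro: has_vector_derivative_at_within)
    moreover have "h integrable_on {v..T}"
      using integrable_on_atLeast_powr_bound[OF v h_cont h_le] by (rule integrable_on_subinterval) auto
    ultimately have "((\<lambda>t. f t + h t - h t) has_integral G T - G v - integral {v..T} h) {v..T}"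
      by (intro has_integral_diff integrable_integral)
    then have "(f has_integral G T - G v - integral {v..T} h) {v..T}"
      by simp
    then show ?thesis by (rule integral_unique)
  qed
  have G_le: "norm (G t) \<le> L / (2 * pi * x) / sqrt t" if "v \<le> t" for t
    using divide_right_mono[OF g_le[OF that], of "2 * pi * x"] x
    by (simp add: G_def norm_mult norm_divide Re_\<alpha> norm_\<alpha> mult.commute)
  then have "\<forall>\<^sub>F T in at_top. norm (G T) \<le> L / (2 * pi * x) / sqrt T"
    by (rule eventually_at_top_linorderI)
  moreover have "((\<lambda>T. L / (2 * pi * x) / sqrt T) \<longlongrightarrow> 0) at_top"
    by (intro tendsto_divide_0[OF tendsto_const] filterlim_at_top_imp_at_infinity sqrt_at_top)
  ultimately have "(G \<longlongrightarrow> 0) at_top"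
    by (rule Lim_null_comparison)
  then have "((\<lambda>T. G T - G v - integral {v..T} h) \<longlongrightarrow> 0 - G v - integral {v..} h) at_top"
    by (intro tendsto_diff tendsto_const tendsto_integral_atLeastAtMost[OF v h_cont h_le])
  moreover have "\<forall>\<^sub>F T in at_top. G T - G v - integral {v..T} h = integral {v..T} f"
    using by_parts by (rule eventually_at_top_linorderI[of v, OF sym])
  ultimately have "((\<lambda>T. integral {v..T} f) \<longlongrightarrow> 0 - G v - integral {v..} h) at_top"
    by (rule Lim_transform_eventually)
  then have "improper_integral_from v f = - (G v + integral {v..} h)"
    unfolding improper_integral_from_def by (simp add: tendsto_Lim)
  then have "norm (improper_integral_from v f) \<le> norm (G v) + norm (integral {v..} h)"
    using norm_triangle_ineq4[of "- G v" "integral {v..} h"] by simp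
  also have "\<dots> \<le> L / (2 * pi * x) / sqrt v + 2 * (L / (2 * pi * x)) / sqrt v"
    using G_le[of v] norm_integral_atLeast_le[OF v h_le] by simp
  also have "\<dots> = 3 * L / (2 * pi * x * sqrt v)"
    by (simp add: field_simps)
  finally show ?thesis by (simp add: f_def)
qed

section \<open>Bounds for eps1\<close>

lemma abs_ln_add_le_sqrt:
  fixes a c t :: real
  assumes c: "0 < c" "c \<le> t" and a: "\<bar>a\<bar> \<le> 2"
  shows "\<bar>ln t + a\<bar> \<le> (2 + 2 / c + 2 / sqrt c) * sqrt t"
proof -
  have t: "0 < t" using c by linarith
  have "2 / sqrt t = 2 / t * sqrt t" using t by (simp add: field_simps)
  also have "\<dots> \<le> 2 / c * sqrt t" using c t by (intro mult_right_mono divide_left_mono) auto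
  finally have "2 / sqrt t \<le> 2 / c * sqrt t" .
  moreover have "2 \<le> 2 / sqrt c * sqrt t" using c by (simp add: field_simps)
  ultimately show ?thesis
    using abs_ln_le_two_sqrt[OF t] a by (simp add: algebra_simps)
qed

text \<open>The type annotations reproduce the coercions of the first integrand in \<open>eps1\<close>.\<close>

lemma norm_improper_integral_log_le:
  fixes x v c :: real
  assumes x: "0 < x" and c: "0 < c" "c \<le> v"
  shows "norm (improper_integral_from v
           (\<lambda>t. exp (2 * pi * \<i> * t * x) / (pi * t :: real) * (ln t + 2 * euler_mascheroni :: real)))
         \<le> (2 + 2 / c + 2 / sqrt c) / (x * sqrt v)"
proof -
  define L where "L = 2 + 2 / c + 2 / sqrt c"
  define g where "g t = (ln t + 2 * euler_mascheroni) / (pi * t)" for t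
  define g' where "g' t = (1 - ln t - 2 * euler_mascheroni) / (pi * t\<^sup>2)" for t
  have v: "0 < v" using c by linarith
  have L: "0 \<le> L" using c by (simp add: L_def)
  have \<gamma>: "\<bar>2 * euler_mascheroni\<bar> \<le> (2::real)" "\<bar>2 * euler_mascheroni - 1\<bar> \<le> (2::real)"
    using euler_mascheroni_pos euler_mascheroni_less_13_over_22 by auto
  have g_deriv: "(g has_real_derivative g' t) (at t)" if "v \<le> t" for t
    using that v unfolding g_def g'_def
    by (auto intro!: derivative_eq_intros simp: field_simps power2_eq_square)
  have g'_cont: "continuous_on {v..} g'"
    unfolding g'_def using v by (intro continuous_intros) auto
  have g_le: "\<bar>g t\<bar> \<le> L / sqrt t" if "v \<le> t" for t
  proof -
    have t: "0 < t" "c \<le> t" using that c by auto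
    have "\<bar>g t\<bar> \<le> \<bar>ln t + 2 * euler_mascheroni\<bar> / t"
      unfolding g_def using t pi_gt3 by (simp add: abs_mult divide_left_mono)
    also have "\<dots> \<le> L * sqrt t / t"
      using abs_ln_add_le_sqrt[OF c(1) t(2) \<gamma>(1)] t by (simp add: L_def divide_right_mono)
    also have "\<dots> = L / sqrt t"
      using t by (simp add: field_simps)
    finally show ?thesis .
  qed
  have g'_le: "\<bar>g' t\<bar> \<le> L * t powr (-3/2)" if "v \<le> t" for t
  proof -
    have t: "0 < t" "c \<le> t" using that c by auto
    have "\<bar>g' t\<bar> = \<bar>ln t + (2 * euler_mascheroni - 1)\<bar> / (pi * t\<^sup>2)"
      unfolding g'_def using t by (simp add: abs_minus_commute)
    also have "\<dots> \<le> \<bar>ln t + (2 * euler_mascheroni - 1)\<bar> / t\<^sup>2"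
      using t pi_gt3 mult_right_mono[of 1 pi "t\<^sup>2"] by (intro divide_left_mono) auto
    also have "\<dots> \<le> L * sqrt t / t\<^sup>2"
      using abs_ln_add_le_sqrt[OF c(1) t(2) \<gamma>(2)] t by (simp add: L_def divide_right_mono)
    also have "\<dots> = L * t powr (-3/2)"
      by (simp only: times_divide_eq_right[symmetric] sqrt_divide_square_eq_powr[OF t(1)])
    finally show ?thesis .
  qed
  have "(\<lambda>t. exp (2 * pi * \<i> * t * x) / (pi * t :: real) * (ln t + 2 * euler_mascheroni :: real))
      = (\<lambda>t. exp (2 * pi * \<i> * t * x) * g t)"
    by (rule ext) (simp only: g_def of_real_divide of_real_mult of_real_inverse divide_inverse mult_ac)
  then have "norm (improper_integral_from v
           (\<lambda>t. exp (2 * pi * \<i> * t * x) / (pi * t :: real) * (ln t + 2 * euler_mascheroni :: real)))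
         \<le> 3 * L / (2 * pi * x * sqrt v)"
    using improper_integral_from_oscillatory_le[OF x v g_deriv g'_cont g_le g'_le] by simp
  also have "\<dots> = 3 / (2 * pi) * (L / (x * sqrt v))"
    by simp
  also have "\<dots> \<le> 1 * (L / (x * sqrt v))"
    using pi_gt3 L x v by (intro mult_right_mono) auto
  finally show ?thesis by (simp add: L_def)
qed

lemma norm_integral_Delta_le:
  fixes x v :: real
  assumes v: "0 < v"
  shows "norm (integral {v..} (\<lambda>t. Delta t * exp (2 * pi * \<i> * t * x) / (complex_of_real t)\<^sup>2))
           \<le> 20 / sqrt v"
proof -
  have "norm (Delta t * exp (2 * pi * \<i> * t * x) / (complex_of_real t)\<^sup>2) \<le> 10 * t powr (-3/2)"
    if "v \<le> t" for t
  proof -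
    have t: "0 < t" using that v by linarith
    have "norm (Delta t * exp (2 * pi * \<i> * t * x) / (complex_of_real t)\<^sup>2) = \<bar>Delta t\<bar> / t\<^sup>2"
      by (simp add: norm_mult norm_divide norm_power)
    also have "\<dots> \<le> 10 * sqrt t / t\<^sup>2"
      using abs_Delta_le[OF t] by (simp add: divide_right_mono)
    also have "\<dots> = 10 * t powr (-3/2)"
      by (simp only: times_divide_eq_right[symmetric] sqrt_divide_square_eq_powr[OF t])
    finally show ?thesis .
  qed
  then have "norm (integral {v..} (\<lambda>t. Delta t * exp (2 * pi * \<i> * t * x) / (complex_of_real t)\<^sup>2))
      \<le> 2 * 10 / sqrt v"
    by (rule norm_integral_atLeast_le[OF v])
  then show ?thesis by simp
qed

lemma norm_eps1_le:
  fixes y w c :: real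
  assumes y: "0 < y" and c: "0 < c" "c \<le> w"
  shows "norm (eps1 y w) \<le> (2 + 2 / c + 2 / sqrt c) / (y * sqrt w) + 30 / sqrt w"
proof -
  have w: "0 < w" using c by linarith
  have "norm (exp (2 * pi * \<i> * w * y) / w * Delta w) = \<bar>Delta w\<bar> / w"
    using w by (simp add: norm_mult norm_divide)
  also have "\<dots> \<le> 10 * sqrt w / w"
    using abs_Delta_le[OF w] w by (simp add: divide_right_mono)
  also have "\<dots> = 10 / sqrt w"
    using w by (simp add: field_simps)
  finally have boundary: "norm (exp (2 * pi * \<i> * w * y) / w * Delta w) \<le> 10 / sqrt w" .
  have triangle: "norm (- a + b - d) \<le> norm a + norm b + norm d" for a b d :: complex
    using norm_triangle_ineq4[of "- a + b" d] norm_triangle_ineq[of "- a" b] by simp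
  show ?thesis
    unfolding eps1_def
    by (rule order_trans[OF triangle])
      (use boundary norm_improper_integral_log_le[OF y c] norm_integral_Delta_le[OF w, of y] in linarith)
qed

lemma norm_eps1_reflection_le:
  fixes x v c K :: real
  assumes x: "0 < x" "x \<le> K" and c: "0 < c" "c \<le> v" "c \<le> x\<^sup>2 * v"
  shows "norm (eps1 x v - of_real x * cnj (eps1 (1 / x) (x\<^sup>2 * v)))
           \<le> ((2 + 2 / c + 2 / sqrt c) * (1 + K\<^sup>2) + 60 * K) / sqrt (x\<^sup>2 * v)"
proof -
  define L where "L = 2 + 2 / c + 2 / sqrt c"
  have v: "0 < v" using c by linarith
  have L: "0 \<le> L" using c by (simp add: L_def)
  have s: "sqrt (x\<^sup>2 * v) = x * sqrt v" using x by (simp add: real_sqrt_mult)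
  have "L / (x * sqrt v) + 30 / sqrt v = (L + 30 * x) / (x * sqrt v)"
    using x v by (simp add: field_simps)
  then have bound: "norm (eps1 x v) \<le> (L + 30 * x) / (x * sqrt v)"
    using norm_eps1_le[OF x(1) c(1,2)] by (simp add: L_def)
  have "L / (1 / x * (x * sqrt v)) + 30 / (x * sqrt v) = (L * x + 30) / (x * sqrt v)"
    using x v by (simp add: field_simps)
  then have bound': "norm (eps1 (1 / x) (x\<^sup>2 * v)) \<le> (L * x + 30) / (x * sqrt v)"
    using norm_eps1_le[of "1 / x" c "x\<^sup>2 * v"] x c by (simp add: L_def s)
  have "norm (eps1 x v - of_real x * cnj (eps1 (1 / x) (x\<^sup>2 * v)))
      \<le> norm (eps1 x v) + x * norm (eps1 (1 / x) (x\<^sup>2 * v))"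
    using norm_triangle_ineq4[of "eps1 x v" "of_real x * cnj (eps1 (1 / x) (x\<^sup>2 * v))"] x
    by (simp add: norm_mult)
  also have "\<dots> \<le> (L + 30 * x) / (x * sqrt v) + x * ((L * x + 30) / (x * sqrt v))"
    using bound bound' x by (intro add_mono mult_left_mono) auto
  also have "\<dots> = (L * (1 + x\<^sup>2) + 60 * x) / (x * sqrt v)"
    using x v by (simp add: field_simps power2_eq_square)
  also have "\<dots> \<le> (L * (1 + K\<^sup>2) + 60 * K) / (x * sqrt v)"
    using x v L by (intro divide_right_mono add_mono mult_left_mono power_mono) auto
  finally show ?thesis unfolding s L_def .
qed

theorem proposition13:
  fixes K1 K2 :: real
  assumes "K1 > 0" and "K2 > 0"
  shows "\<exists>C. \<forall>x v. 0 < x \<and> x \<le> K1 \<and> v > 0 \<and> x\<^sup>2 * v \<ge> K2 \<longrightarrow>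
           norm (eps1 x v - of_real x * cnj (eps1 (1 / x) (x\<^sup>2 * v)))
             \<le> C * (x\<^sup>2 * v) powr (-1/2)"
proof -
  \<comment> \<open>Chosen so that both \<open>v \<ge> c\<close> and \<open>x\<^sup>2 v \<ge> c\<close>.\<close>
  define c where "c = min K2 (K2 / K1\<^sup>2)"
  define C where "C = (2 + 2 / c + 2 / sqrt c) * (1 + K1\<^sup>2) + 60 * K1"
  have c: "0 < c" using assms by (simp add: c_def)
  show ?thesis
  proof (intro exI[of _ C] allI impI, elim conjE)
    fix x v :: real
    assume x: "0 < x" "x \<le> K1" and "0 < v" and w: "K2 \<le> x\<^sup>2 * v"
    have "K2 / K1\<^sup>2 \<le> K2 / x\<^sup>2"
      using x assms by (intro divide_left_mono power_mono) auto
    also have "\<dots> \<le> v"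
      using w x by (simp add: divide_le_eq mult.commute)
    finally have "c \<le> v" by (simp add: c_def)
    moreover have "c \<le> x\<^sup>2 * v" using w by (simp add: c_def)
    ultimately have "norm (eps1 x v - of_real x * cnj (eps1 (1 / x) (x\<^sup>2 * v))) \<le> C / sqrt (x\<^sup>2 * v)"
      using norm_eps1_reflection_le[OF x c] by (simp add: C_def)
    then show "norm (eps1 x v - of_real x * cnj (eps1 (1 / x) (x\<^sup>2 * v))) \<le> C * (x\<^sup>2 * v) powr (-1/2)"
      using x \<open>0 < v\<close> by (simp add: powr_minus_divide powr_half_sqrt)
  qed
qed

end
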